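(* Let $D$ be a division ring and $R$ a maximal subring of $D$. Then either there exists $\lambda\in D\setminus R$ with $\lambda R\subseteq R\lambda$ (equivalently $R\lambda\subseteq\lambda R$), or $N_l(R)=N_r(R)=N(R)=U(R)\cup\{0\}$.
   Context: All rings are associative unital and subrings share the identity. A maximal subring of a ring $T$ is a proper subring maximal under inclusion among proper subrings of $T$. For a subring $R$ of a division ring $D$: $N_l(R)=\{x\in D: Rx\subseteq xR\}$, $N_r(R)=\{x\in D: xR\subseteq Rx\}$, $N(R)=\{x\in D: xR=Rx\}$; $U(R)$ is the set of units of $R$. *)

theory Defs
  imports Main
begin

definition is_subring :: "'a::ring_1 set \<Rightarrow> bool" where
  "is_subring R \<longleftrightarrow> 1 \<in> R \<and> (\<forall>x\<in>R. \<forall>y\<in>R. x - y \<in> R \<and> x * y \<in> R)"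

definition maximal_subring :: "'a::ring_1 set \<Rightarrow> bool" where
  "maximal_subring R \<longleftrightarrow> is_subring R \<and> R \<noteq> UNIV \<and>
     (\<forall>S. is_subring S \<and> S \<noteq> UNIV \<and> R \<subseteq> S \<longrightarrow> S = R)"

definition N_l :: "'a::ring_1 set \<Rightarrow> 'a set" where
  "N_l R = {x. (\<lambda>r. r * x) ` R \<subseteq> (\<lambda>r. x * r) ` R}"

definition N_r :: "'a::ring_1 set \<Rightarrow> 'a set" where
  "N_r R = {x. (\<lambda>r. x * r) ` R \<subseteq> (\<lambda>r. r * x) ` R}"

definition N :: "'a::ring_1 set \<Rightarrow> 'a set" where
  "N R = {x. (\<lambda>r. x * r) ` R = (\<lambda>r. r * x) ` R}"

definition U :: "'a::ring_1 set \<Rightarrow> 'a set" where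
  "U R = {x \<in> R. \<exists>y\<in>R. x * y = 1 \<and> y * x = 1}"

end

theory Submission
  imports Defs
begin

text \<open>For nonzero \<open>x\<close>, \<open>x \<in> N_l R\<close> means \<open>x\<inverse> R x \<subseteq> R\<close> and \<open>x \<in> N_r R\<close> means
  \<open>x R x\<inverse> \<subseteq> R\<close>. If \<open>c R c\<inverse> \<subseteq> R\<close>, then \<open>c\<inverse> R c\<close> is a subring containing \<open>R\<close>, and
  it is proper because conjugation is bijective; maximality forces \<open>c\<inverse> R c = R\<close>. Hence
  \<open>N_r R \<subseteq> N_l R\<close>, and as \<open>x \<in> N_l R\<close> iff \<open>x\<inverse> \<in> N_r R\<close>, all three normalisers coincide
  and are closed under inversion. If the first alternative fails, then \<open>N_r R \<subseteq> R\<close>, so every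
  nonzero element of \<open>N R\<close> lies in \<open>R\<close> together with its inverse, i.e. is a unit of \<open>R\<close>;
  conversely, units of \<open>R\<close> always normalise \<open>R\<close>.\<close>

lemma is_subringD:
  assumes "is_subring R" "x \<in> R" "y \<in> R"
  shows "x - y \<in> R" "x * y \<in> R"
  using assms unfolding is_subring_def by auto

lemma conjugate_inverse_cancel:
  fixes c :: "'a::division_ring"
  assumes "c \<noteq> 0"
  shows "inverse c * (c * x * inverse c) * c = x"
  using assms by (simp add: mult.assoc[symmetric]) (simp add: mult.assoc)

lemma conjugate_cancel:
  fixes c :: "'a::division_ring"
  assumes "c \<noteq> 0"
  shows "c * (inverse c * x * c) * inverse c = x"
  using conjugate_inverse_cancel[of "inverse c" x] assms by simp

lemma is_subring_conjugate:
  fixes c :: "'a::division_ring"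
  assumes R: "is_subring R" and c: "c \<noteq> 0"
  shows "is_subring ((\<lambda>r. inverse c * r * c) ` R)" (is "is_subring ?S")
  unfolding is_subring_def
proof (intro conjI ballI)
  show "1 \<in> ?S"
    using R c by (auto simp: is_subring_def image_iff intro!: bexI[of _ 1])
next
  fix x y assume "x \<in> ?S" "y \<in> ?S"
  then obtain a b where ab: "a \<in> R" "b \<in> R"
    and x: "x = inverse c * a * c" and y: "y = inverse c * b * c"
    by blast
  have diff: "x - y = inverse c * (a - b) * c"
    unfolding x y by (simp add: algebra_simps)
  have "x * y = inverse c * a * (c * inverse c) * b * c"
    unfolding x y by (simp add: mult.assoc)
  then have prod: "x * y = inverse c * (a * b) * c"
    using c by (simp add: mult.assoc)
  from diff prod show "x - y \<in> ?S" "x * y \<in> ?S"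
    using is_subringD[OF R ab] by auto
qed

lemma maximal_subring_conjugate_subset:
  fixes c :: "'a::division_ring"
  assumes max: "maximal_subring R" and c: "c \<noteq> 0"
    and conj: "(\<lambda>r. c * r * inverse c) ` R \<subseteq> R"
  shows "(\<lambda>r. inverse c * r * c) ` R \<subseteq> R"
proof -
  let ?S = "(\<lambda>r. inverse c * r * c) ` R"
  have R: "is_subring R" and "R \<noteq> UNIV"
    using max unfolding maximal_subring_def by auto
  have "R \<subseteq> ?S"
  proof
    fix r assume "r \<in> R"
    then show "r \<in> ?S"
      using conj conjugate_inverse_cancel[OF c, of r, symmetric] by blast
  qed
  moreover have "?S \<noteq> UNIV"
  proof
    assume "?S = UNIV"
    have "y = c * (inverse c * y * c) * inverse c" for y
      using conjugate_cancel[OF c] by simp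
    then have "y \<in> (\<lambda>r. c * r * inverse c) ` ?S" for y
      using \<open>?S = UNIV\<close> by blast
    moreover have "(\<lambda>r. c * r * inverse c) ` ?S = R"
      using conjugate_cancel[OF c] by (simp add: image_image)
    ultimately show False using \<open>R \<noteq> UNIV\<close> by blast
  qed
  ultimately have "?S = R"
    using max is_subring_conjugate[OF R c] unfolding maximal_subring_def by blast
  then show ?thesis by simp
qed

lemma mem_N_l_iff:
  fixes x :: "'a::division_ring"
  assumes "x \<noteq> 0"
  shows "x \<in> N_l R \<longleftrightarrow> (\<lambda>r. inverse x * r * x) ` R \<subseteq> R"
proof
  assume "x \<in> N_l R"
  show "(\<lambda>r. inverse x * r * x) ` R \<subseteq> R"
  proof clarify
    fix r assume "r \<in> R"
    then obtain s where "s \<in> R" "r * x = x * s"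
      using \<open>x \<in> N_l R\<close> unfolding N_l_def by blast
    then have "inverse x * r * x = s"
      using assms by (metis mult.assoc left_inverse mult_1_left)
    then show "inverse x * r * x \<in> R"
      using \<open>s \<in> R\<close> by simp
  qed
next
  assume conj: "(\<lambda>r. inverse x * r * x) ` R \<subseteq> R"
  have "r * x = x * (inverse x * r * x)" for r
    using assms by (simp add: mult.assoc[symmetric])
  then show "x \<in> N_l R"
    using conj unfolding N_l_def by blast
qed

lemma mem_N_r_iff:
  fixes x :: "'a::division_ring"
  assumes "x \<noteq> 0"
  shows "x \<in> N_r R \<longleftrightarrow> (\<lambda>r. x * r * inverse x) ` R \<subseteq> R"
proof
  assume "x \<in> N_r R"
  show "(\<lambda>r. x * r * inverse x) ` R \<subseteq> R"
  proof clarify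
    fix r assume "r \<in> R"
    then obtain s where "s \<in> R" "x * r = s * x"
      using \<open>x \<in> N_r R\<close> unfolding N_r_def by blast
    then show "x * r * inverse x \<in> R"
      using assms by (simp add: mult.assoc)
  qed
next
  assume conj: "(\<lambda>r. x * r * inverse x) ` R \<subseteq> R"
  have "x * r = (x * r * inverse x) * x" for r
    using assms by (simp add: mult.assoc)
  then show "x \<in> N_r R"
    using conj unfolding N_r_def by blast
qed

lemma N_eq_N_l_inter_N_r: "N R = N_l R \<inter> N_r R"
  unfolding N_def N_l_def N_r_def by blast

lemma zero_mem_N_r: "(0::'a::ring_1) \<in> N_r R"
  unfolding N_r_def by auto

lemma mem_N_l_iff_inverse_mem_N_r:
  fixes x :: "'a::division_ring"
  shows "x \<in> N_l R \<longleftrightarrow> inverse x \<in> N_r R"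
proof (cases "x = 0")
  case True
  then show ?thesis
    using zero_mem_N_r unfolding N_l_def by auto
next
  case False
  then show ?thesis
    using mem_N_l_iff[OF False] mem_N_r_iff[of "inverse x"] by simp
qed

lemma maximal_subring_N_r_subset_N_l:
  fixes R :: "'a::division_ring set"
  assumes "maximal_subring R"
  shows "N_r R \<subseteq> N_l R"
proof
  fix x assume x: "x \<in> N_r R"
  show "x \<in> N_l R"
  proof (cases "x = 0")
    case True
    then show ?thesis
      using zero_mem_N_r mem_N_l_iff_inverse_mem_N_r[of 0 R] by simp
  next
    case False
    then show ?thesis
      using x maximal_subring_conjugate_subset[OF assms False]
      unfolding mem_N_l_iff[OF False] mem_N_r_iff[OF False] by blast
  qed
qed

lemma maximal_subring_N_l_eq_N_r:
  fixes R :: "'a::division_ring set"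
  assumes "maximal_subring R"
  shows "N_l R = N_r R"
proof
  show "N_l R \<subseteq> N_r R"
  proof
    fix x assume "x \<in> N_l R"
    then have "inverse x \<in> N_l R"
      using maximal_subring_N_r_subset_N_l[OF assms] mem_N_l_iff_inverse_mem_N_r by blast
    then show "x \<in> N_r R"
      using mem_N_l_iff_inverse_mem_N_r[of "inverse x"] by simp
  qed
qed (rule maximal_subring_N_r_subset_N_l[OF assms])

lemma units_subset_N_r:
  assumes "is_subring R"
  shows "U R \<subseteq> N_r R"
proof
  fix x assume "x \<in> U R"
  then obtain y where "x \<in> R" "y \<in> R" "y * x = 1"
    unfolding U_def by blast
  then have "x * r = (x * r * y) * x \<and> x * r * y \<in> R" if "r \<in> R" for r
    using that is_subringD(2)[OF assms] by (simp add: mult.assoc)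
  then show "x \<in> N_r R"
    unfolding N_r_def by blast
qed

lemma maximal_subring_N_r_eq_units:
  fixes R :: "'a::division_ring set"
  assumes max: "maximal_subring R" and N_r_R: "N_r R \<subseteq> R"
  shows "N_r R = U R \<union> {0}"
proof
  show "N_r R \<subseteq> U R \<union> {0}"
  proof
    fix x assume x: "x \<in> N_r R"
    have "inverse x \<in> N_r R"
      using x maximal_subring_N_l_eq_N_r[OF max] mem_N_l_iff_inverse_mem_N_r[of x R]
      by simp
    then have "x \<in> R" "inverse x \<in> R"
      using x N_r_R by auto
    show "x \<in> U R \<union> {0}"
    proof (cases "x = 0")
      case False
      then have "x * inverse x = 1" "inverse x * x = 1" by simp_all
      then have "x \<in> U R"
        using \<open>x \<in> R\<close> \<open>inverse x \<in> R\<close>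
        unfolding U_def by (intro CollectI conjI bexI[of _ "inverse x"])
      then show ?thesis by simp
    qed simp
  qed
next
  have "is_subring R"
    using max unfolding maximal_subring_def by simp
  then show "U R \<union> {0} \<subseteq> N_r R"
    using units_subset_N_r zero_mem_N_r by blast
qed

theorem lemma2p2:
  fixes R :: "'a::division_ring set"
  assumes "maximal_subring R"
  shows "(\<exists>l. l \<notin> R \<and> (\<lambda>r. l * r) ` R \<subseteq> (\<lambda>r. r * l) ` R)
         \<or> (N_l R = N_r R \<and> N_r R = N R \<and> N R = U R \<union> {0})"
proof (cases "N_r R \<subseteq> R")
  case True
  have "N_l R = N_r R"
    using maximal_subring_N_l_eq_N_r[OF assms] .
  moreover have "N R = N_r R"
    unfolding N_eq_N_l_inter_N_r \<open>N_l R = N_r R\<close> by simp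
  ultimately show ?thesis
    using maximal_subring_N_r_eq_units[OF assms True] by (intro disjI2) simp
next
  case False
  then show ?thesis
    unfolding N_r_def by (intro disjI1) blast
qed

end
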